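(* Define $U_0=\{x\mapsto ax+b : a\in\mathbb{R}_+,\ b\in\mathbb{R}\}$, $U_{n+1}=\{x\mapsto a\,\mathrm{LReLU}_\beta(f(x))+b : a,\beta\in\mathbb{R}_+,\ b\in\mathbb{R},\ f\in U_n\}$ for $n\ge 0$, and $U=\bigcup_{n\ge0}U_n$ (functions $\mathbb{R}\to\mathbb{R}$). Then for every continuous non-decreasing function $\sigma:\mathbb{R}\to\mathbb{R}$, every compact $K\subset\mathbb{R}$ and every $\epsilon>0$, there exists $g\in U$ with $\sup_{x\in K}|\sigma(x)-g(x)|<\epsilon$.
   Context: $\mathbb{R}_+$ denotes the positive reals. For $\beta\in\mathbb{R}$, $\mathrm{LReLU}_\beta(x)=x$ if $x\ge 0$ and $\beta x$ if $x<0$. *)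

theory Defs
  imports "HOL-Analysis.Analysis"
begin

definition LReLU :: "real \<Rightarrow> real \<Rightarrow> real" where
  "LReLU \<beta> x = (if x \<ge> 0 then x else \<beta> * x)"

fun U_n :: "nat \<Rightarrow> (real \<Rightarrow> real) set" where
  "U_n 0 = {(\<lambda>x. a * x + b) | a b. a > 0}"
| "U_n (Suc n) = {(\<lambda>x. a * LReLU \<beta> (f x) + b) | a \<beta> b f. a > 0 \<and> \<beta> > 0 \<and> f \<in> U_n n}"

definition U :: "(real \<Rightarrow> real) set" where
  "U = (\<Union>n. U_n n)"

end

theory Submission
  imports Defs
begin

text \<open>Members of \<open>U\<close> are strictly increasing, and conversely they can take any strictly
  increasing values at finitely many strictly increasing nodes. On a grid finer than the modulus
  of uniform continuity of \<open>\<sigma>\<close>, interpolate \<open>\<sigma>\<close> plus a small increasing tilt (the tilt makes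
  the data strictly increasing even where \<open>\<sigma>\<close> is flat). Between two consecutive nodes both \<open>\<sigma>\<close>
  and the interpolant are monotone, so they differ by at most the oscillation of \<open>\<sigma>\<close> on the cell
  plus the total tilt.\<close>

lemma LReLU_strict_mono: "\<beta> > 0 \<Longrightarrow> strict_mono (LReLU \<beta>)"
  unfolding strict_mono_def LReLU_def
  by (auto intro: mult_strict_left_mono) (smt (verit) mult_pos_neg)

lemma U_n_strict_mono: "f \<in> U_n n \<Longrightarrow> strict_mono f"
proof (induction n arbitrary: f)
  case 0
  then show ?case by (auto simp: strict_mono_def)
next
  case (Suc n)
  then obtain a \<beta> b g where f: "f = (\<lambda>x. a * LReLU \<beta> (g x) + b)"
    and "a > 0" "\<beta> > 0" "g \<in> U_n n"
    by auto
  with Suc.IH have "strict_mono (LReLU \<beta> \<circ> g)"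
    using LReLU_strict_mono strict_mono_o by blast
  with \<open>a > 0\<close> show ?case
    unfolding f strict_mono_def by simp
qed

lemma U_strict_mono: "f \<in> U \<Longrightarrow> strict_mono f"
  unfolding U_def using U_n_strict_mono by blast

lemma U_n_add_const: "f \<in> U_n n \<Longrightarrow> (\<lambda>x. f x + c) \<in> U_n n"
proof (cases n)
  case 0
  moreover assume "f \<in> U_n n"
  ultimately obtain a b where "f = (\<lambda>x. a * x + b)" "a > 0" by auto
  then show ?thesis
    unfolding 0 U_n.simps by (intro CollectI exI[of _ a] exI[of _ "b + c"]) auto
next
  case (Suc k)
  moreover assume "f \<in> U_n n"
  ultimately obtain a \<beta> b g where "f = (\<lambda>x. a * LReLU \<beta> (g x) + b)"
    "a > 0" "\<beta> > 0" "g \<in> U_n k"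
    by auto
  then show ?thesis
    unfolding Suc U_n.simps
    by (intro CollectI exI[of _ a] exI[of _ \<beta>] exI[of _ "b + c"] exI[of _ g]) auto
qed

lemma U_add_const: "f \<in> U \<Longrightarrow> (\<lambda>x. f x + c) \<in> U"
  unfolding U_def using U_n_add_const by blast

lemma U_affine: "a > 0 \<Longrightarrow> (\<lambda>x. a * x + b) \<in> U"
  unfolding U_def by (rule UN_I[of 0]) auto

lemma U_LReLU_layer:
  assumes "f \<in> U" "a > 0" "\<beta> > 0"
  shows "(\<lambda>x. a * LReLU \<beta> (f x) + b) \<in> U"
proof -
  obtain n where "f \<in> U_n n" using assms(1) unfolding U_def by blast
  then have "(\<lambda>x. a * LReLU \<beta> (f x) + b) \<in> U_n (Suc n)" using assms by auto
  then show ?thesis unfolding U_def by blast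
qed

text \<open>Induction on the number of nodes: after matching all nodes but the first one,
  a single LReLU kink at the level of the second node bends the graph down onto the first
  node while leaving everything to its right unchanged.\<close>

lemma U_interpolates:
  fixes xs ys :: "nat \<Rightarrow> real"
  assumes "strict_mono_on {..m} xs" "strict_mono_on {..m} ys"
  shows "\<exists>g\<in>U. \<forall>i\<le>m. g (xs i) = ys i"
  using assms
proof (induction m arbitrary: xs ys)
  case 0
  have "(\<lambda>x. 1 * x + (ys 0 - xs 0)) \<in> U" by (rule U_affine) simp
  then show ?case by (rule bexI[rotated]) simp
next
  case (Suc m)
  have "strict_mono_on {..m} (\<lambda>i. xs (Suc i))" "strict_mono_on {..m} (\<lambda>i. ys (Suc i))"
    using Suc.prems by (auto simp: strict_mono_on_def)
  from Suc.IH[OF this] obtain f where f: "f \<in> U" "\<forall>i\<le>m. f (xs (Suc i)) = ys (Suc i)"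
    by blast
  define c where "c = ys 1"
  have f_x1: "f (xs 1) = c" using f(2) unfolding c_def by auto
  have f_x0: "f (xs 0) < c"
    using strict_monoD[OF U_strict_mono[OF f(1)]] strict_mono_onD[OF Suc.prems(1)] f_x1
    by fastforce
  have y0: "ys 0 < c" using strict_mono_onD[OF Suc.prems(2)] unfolding c_def by simp
  define \<beta> where "\<beta> = (c - ys 0) / (c - f (xs 0))"
  have "\<beta> > 0" unfolding \<beta>_def using y0 f_x0 by simp
  define g where "g x = 1 * LReLU \<beta> (f x + (- c)) + c" for x
  have "g \<in> U"
    unfolding g_def by (intro U_LReLU_layer U_add_const f(1) \<open>\<beta> > 0\<close>) simp
  moreover have "g (xs i) = ys i" if "i \<le> Suc m" for i
  proof (cases i)
    case 0
    have "g (xs 0) = \<beta> * (f (xs 0) - c) + c" using f_x0 unfolding g_def LReLU_def by simp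
    also have "\<dots> = ys 0" using f_x0 unfolding \<beta>_def by (simp add: field_simps)
    finally show ?thesis using 0 by simp
  next
    case (Suc j)
    have "xs 1 \<le> xs i"
      using strict_mono_onD[OF Suc.prems(1), of 1 i] that Suc by (cases "j = 0") auto
    then have "c \<le> f (xs i)"
      using strict_mono_leD[OF U_strict_mono[OF f(1)]] f_x1 by metis
    then have "g (xs i) = f (xs i)" unfolding g_def LReLU_def by simp
    then show ?thesis using f(2) that Suc by auto
  qed
  ultimately show ?case by blast
qed

lemma mono_on_diff_bound:
  fixes f g :: "real \<Rightarrow> real"
  assumes "mono_on {u..v} f" "mono_on {u..v} g" "x \<in> {u..v}"
  shows "\<bar>f x - g x\<bar> \<le> max (f v - g u) (g v - f u)"
proof -
  have "u \<le> x" "x \<le> v" using assms(3) by auto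
  then have "f x \<le> f v" "g x \<le> g v" "f u \<le> f x" "g u \<le> g x"
    using assms(1,2) by (simp_all add: mono_onD)
  then show ?thesis by linarith
qed

lemma bracketing_index:
  fixes xs :: "nat \<Rightarrow> 'a::linorder"
  assumes "0 < N" "xs 0 \<le> x" "x \<le> xs N"
  shows "\<exists>i<N. xs i \<le> x \<and> x \<le> xs (Suc i)"
  using assms(1,3)
proof (induction N rule: nat_induct_non_zero)
  case 1
  then show ?case using assms(2) by auto
next
  case (Suc n)
  show ?case
  proof (cases "x \<le> xs n")
    case True
    with Suc.IH show ?thesis using less_Suc_eq by blast
  next
    case False
    with Suc.prems show ?thesis by (intro exI[of _ n]) auto
  qed
qed

lemma U_approx_interval:
  fixes \<sigma> :: "real \<Rightarrow> real"
  assumes "continuous_on {l..r} \<sigma>" "mono_on {l..r} \<sigma>" "l < r" "\<epsilon> > 0"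
  shows "\<exists>g\<in>U. \<forall>x\<in>{l..r}. \<bar>\<sigma> x - g x\<bar> \<le> \<epsilon>"
proof -
  obtain d where "d > 0"
    and d: "\<And>x x'. x \<in> {l..r} \<Longrightarrow> x' \<in> {l..r} \<Longrightarrow> dist x' x < d \<Longrightarrow> dist (\<sigma> x') (\<sigma> x) < \<epsilon>/2"
    using compact_uniformly_continuous[OF assms(1) compact_Icc, unfolded uniformly_continuous_on_def,
        rule_format, of "\<epsilon>/2"] \<open>\<epsilon> > 0\<close>
    by auto
  obtain N :: nat where N: "(r - l) / d < N" using reals_Archimedean2 by blast
  have "0 < (r - l) / d" using \<open>l < r\<close> \<open>d > 0\<close> by simp
  with N have "N > 0" by linarith
  define h where "h = (r - l) / N"
  have "h > 0" unfolding h_def using \<open>l < r\<close> \<open>N > 0\<close> by simp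
  have "h < d" unfolding h_def using N \<open>d > 0\<close> \<open>N > 0\<close> by (simp add: field_simps)
  define xs where "xs i = l + real i * h" for i
  define \<delta> where "\<delta> = \<epsilon> / (2 * N)"
  define ys where "ys i = \<sigma> (xs i) + \<delta> * real i" for i
  have "\<delta> > 0" "\<delta> * N = \<epsilon> / 2" unfolding \<delta>_def using \<open>\<epsilon> > 0\<close> \<open>N > 0\<close> by simp_all
  have "xs 0 = l" "xs N = r" unfolding xs_def h_def using \<open>N > 0\<close> by simp_all
  have xs_mono: "strict_mono xs"
    unfolding xs_def strict_mono_def using \<open>h > 0\<close> by simp
  have xs_in: "xs i \<in> {l..r}" if "i \<le> N" for i
    using strict_mono_leD[OF xs_mono, of 0 i] strict_mono_leD[OF xs_mono, of i N] that
      \<open>xs 0 = l\<close> \<open>xs N = r\<close> by simp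
  have "strict_mono_on {..N} ys"
  proof (rule strict_mono_onI)
    fix i j assume "i \<in> {..N}" "j \<in> {..N}" "i < j"
    then have "\<sigma> (xs i) \<le> \<sigma> (xs j)"
      using mono_onD[OF assms(2) xs_in xs_in] strict_monoD[OF xs_mono] by (simp add: less_imp_le)
    moreover have "\<delta> * i < \<delta> * j" using \<open>\<delta> > 0\<close> \<open>i < j\<close> by simp
    ultimately show "ys i < ys j" unfolding ys_def by linarith
  qed
  moreover have "strict_mono_on {..N} xs"
    using xs_mono by (simp add: strict_mono_on_def strict_monoD)
  ultimately obtain g where "g \<in> U" and g: "\<forall>i\<le>N. g (xs i) = ys i"
    using U_interpolates by blast
  have "\<bar>\<sigma> x - g x\<bar> \<le> \<epsilon>" if x_lr: "x \<in> {l..r}" for x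
  proof -
    obtain i where "i < N" and x: "x \<in> {xs i..xs (Suc i)}"
      using bracketing_index[of N xs x] \<open>N > 0\<close> \<open>xs 0 = l\<close> \<open>xs N = r\<close> x_lr by auto
    have "dist (xs (Suc i)) (xs i) = h"
      using \<open>h > 0\<close> by (simp add: xs_def dist_real_def algebra_simps)
    then have "dist (\<sigma> (xs (Suc i))) (\<sigma> (xs i)) < \<epsilon>/2"
      using d xs_in \<open>i < N\<close> \<open>h < d\<close> by simp
    then have close: "\<sigma> (xs (Suc i)) - \<sigma> (xs i) < \<epsilon>/2"
      unfolding dist_real_def by linarith
    have tilt: "0 \<le> \<delta> * i" "\<delta> * Suc i \<le> \<delta> * N"
      using \<open>\<delta> > 0\<close> \<open>i < N\<close> by simp_all
    have "{xs i..xs (Suc i)} \<subseteq> {l..r}"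
      using xs_in[of i] xs_in[of "Suc i"] \<open>i < N\<close> by auto
    then have mono_\<sigma>: "mono_on {xs i..xs (Suc i)} \<sigma>"
      using mono_on_subset[OF assms(2)] by blast
    have mono_g: "mono_on {xs i..xs (Suc i)} g"
      using strict_mono_mono[OF U_strict_mono[OF \<open>g \<in> U\<close>]] by (simp add: mono_imp_mono_on)
    have "\<bar>\<sigma> x - g x\<bar> \<le> max (\<sigma> (xs (Suc i)) - ys i) (ys (Suc i) - \<sigma> (xs i))"
      using mono_on_diff_bound[OF mono_\<sigma> mono_g x] g \<open>i < N\<close> by simp
    also have "\<dots> \<le> \<epsilon>"
      using close tilt \<open>\<delta> * N = \<epsilon> / 2\<close> \<open>\<epsilon> > 0\<close> unfolding ys_def by simp
    finally show ?thesis .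
  qed
  with \<open>g \<in> U\<close> show ?thesis by blast
qed

theorem mainTheorem4:
  fixes \<sigma> :: "real \<Rightarrow> real" and K :: "real set" and \<epsilon> :: real
  assumes "continuous_on UNIV \<sigma>" and "mono \<sigma>"
    and "compact K" and "\<epsilon> > 0"
  shows "\<exists>g\<in>U. (\<forall>x\<in>K. \<bar>\<sigma> x - g x\<bar> < \<epsilon>) \<and>
           (K \<noteq> {} \<longrightarrow> (SUP x\<in>K. \<bar>\<sigma> x - g x\<bar>) < \<epsilon>)"
proof -
  obtain a where "K \<subseteq> {-a..a}"
    using bounded_subset_cbox_symmetric[OF compact_imp_bounded[OF \<open>compact K\<close>]] by auto
  then have K: "K \<subseteq> {-\<bar>a\<bar> - 1..\<bar>a\<bar> + 1}" by auto
  have lr: "-\<bar>a\<bar> - 1 < \<bar>a\<bar> + 1" by simp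
  obtain g where "g \<in> U" and g: "\<forall>x\<in>{-\<bar>a\<bar> - 1..\<bar>a\<bar> + 1}. \<bar>\<sigma> x - g x\<bar> \<le> \<epsilon>/2"
    using U_approx_interval[OF continuous_on_subset[OF assms(1) subset_UNIV]
        mono_imp_mono_on[OF assms(2)] lr half_gt_zero[OF \<open>\<epsilon> > 0\<close>]]
    by blast
  have bound: "\<bar>\<sigma> x - g x\<bar> \<le> \<epsilon>/2" if "x \<in> K" for x
    using g K that by blast
  show ?thesis
  proof (intro bexI[OF _ \<open>g \<in> U\<close>] conjI ballI impI)
    show "\<bar>\<sigma> x - g x\<bar> < \<epsilon>" if "x \<in> K" for x
      using bound[OF that] \<open>\<epsilon> > 0\<close> by linarith
    assume "K \<noteq> {}"
    then have "(SUP x\<in>K. \<bar>\<sigma> x - g x\<bar>) \<le> \<epsilon>/2" using bound by (rule cSUP_least)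
    then show "(SUP x\<in>K. \<bar>\<sigma> x - g x\<bar>) < \<epsilon>" using \<open>\<epsilon> > 0\<close> by linarith
  qed
qed

end
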